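(* Let $\tau = \frac{1+\sqrt{5}}{2}$. Then $$\tau = -\sum_{k=1}^{\infty} \frac{\varphi(k)}{k} \log\left(1 - \frac{1}{\tau^k}\right), \qquad \frac{1}{\tau} = -\sum_{k=1}^{\infty} \frac{\mu(k)}{k} \log\left(1 - \frac{1}{\tau^k}\right).$$
   Context: $\tau=\frac{1+\sqrt5}{2}$ is the golden ratio. $\varphi(k)$ is Euler's totient function (the number of integers $1\le j\le k$ with $\gcd(j,k)=1$). $\mu(k)$ is the Möbius function: $\mu(1)=1$, $\mu(k)=0$ if $k$ is not squarefree, and $\mu(k)=(-1)^r$ if $k$ is squarefree with $r$ distinct prime factors. $\log$ denotes the natural logarithm. *)

theory Defs
  imports "HOL-Analysis.Analysis" "HOL-Number_Theory.Number_Theory" "HOL-Computational_Algebra.Squarefree"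
begin

definition moebius_mu :: "nat \<Rightarrow> int" where
  "moebius_mu k = (if k = 0 \<or> \<not> squarefree k then 0
                   else (-1) ^ card (prime_factors k))"

definition golden_ratio :: real where
  "golden_ratio = (1 + sqrt 5) / 2"

end

theory Submission
  imports Defs
begin

(* Both identities are instances of one Lambert-series identity.  For 0 <= x < 1 and an
   arithmetic function f with |f k| <= C k, expanding -log(1 - x^k) = sum_m x^(km)/m gives
     - sum_k f(k)/k log(1 - x^k) = sum_{k,m} f(k)/k x^(km)/m = sum_n (sum_{d|n} f d)/n x^n,
   where the double series converges absolutely (it is dominated by C sum_{k,m} x^(km)) and the
   second step regroups the pairs (k,m) by n = k m.
   For f = totient the divisor sum is n (Gauss), so the right-hand side is the geometric series
   sum_{n>=1} x^n = x/(1-x); for f = moebius_mu it is [n = 1], so the right-hand side is x.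
   With x = 1/tau, where tau^2 = tau + 1, one has x/(1-x) = tau. *)

lemma alternating_sum_Pow:
  assumes "finite A" "A \<noteq> {}"
  shows "(\<Sum>X\<in>Pow A. (-1::'a::comm_ring_1) ^ card X) = 0"
proof -
  have "(\<Prod>x\<in>A. (1::'a) - 1) = (\<Sum>X\<in>Pow A. (-1) ^ card X * (\<Prod>x\<in>X. 1) * (\<Prod>x\<in>A-X. 1))"
    by (rule prod_diff_conv_sum[OF assms(1)])
  moreover have "(\<Prod>x\<in>A. (1::'a) - 1) = 0"
    using assms by (simp add: power_0_left)
  ultimately show ?thesis by simp
qed

lemma squarefree_prod_prime_factors:
  fixes d :: nat
  assumes "squarefree d" "d > 0"
  shows "\<Prod>(prime_factors d) = d"
proof -
  have "(\<Prod>p \<in> prime_factors d. p ^ multiplicity p d) = \<Prod>(prime_factors d)"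
    using assms squarefree_factorial_semiring'[of d] by (intro prod.cong) auto
  then show ?thesis
    using prod_prime_factors[of d] assms by simp
qed

text \<open>Together these make S \<mapsto> \<Prod>S a bijection between subsets of
  the prime factors of n and squarefree divisors of n.\<close>
lemma prime_factors_prod_subset:
  fixes n :: nat
  assumes "S \<subseteq> prime_factors n"
  shows "prime_factors (\<Prod>S) = S"
proof -
  have fin: "finite S" using assms finite_subset by blast
  have pr: "\<And>p. p \<in> S \<Longrightarrow> prime p" using assms by auto
  then have "0 \<notin> id ` S" by (metis id_apply imageE not_prime_0)
  then have "prime_factors (prod id S) = \<Union>((prime_factors \<circ> id) ` S)"
    using prime_factors_prod[OF fin] by blast
  also have "\<dots> = S" using pr prime_prime_factors by auto
  finally show ?thesis by simp
qed

lemma prod_subset_prime_factors_dvd: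
  fixes n :: nat
  assumes "S \<subseteq> prime_factors n" "n > 0"
  shows "\<Prod>S dvd n"
proof -
  have "\<Prod>S dvd \<Prod>(prime_factors n)"
    by (rule prod_dvd_prod_subset) (use assms in auto)
  also have "\<dots> dvd (\<Prod>p \<in> prime_factors n. p ^ multiplicity p n)"
    by (rule prod_dvd_prod) (auto simp: prime_factors_multiplicity)
  also have "\<dots> = n" using prod_prime_factors[of n] assms by simp
  finally show ?thesis .
qed

lemma squarefree_prod_subset_prime_factors:
  fixes n :: nat
  assumes "S \<subseteq> prime_factors n"
  shows "squarefree (\<Prod>S)"
proof (rule squarefree_prod_coprime)
  have pr: "\<And>p. p \<in> S \<Longrightarrow> prime p" using assms by auto
  show "\<And>a b. a \<in> S \<Longrightarrow> b \<in> S \<Longrightarrow> a \<noteq> b \<Longrightarrow> coprime a b"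
    using pr primes_coprime by metis
  show "\<And>a. a \<in> S \<Longrightarrow> squarefree a"
    using pr squarefree_prime by auto
qed

text \<open>\<mu>(1) = 1, stated with Suc 0 since that is the form the simplifier produces.\<close>
lemma moebius_mu_one: "moebius_mu (Suc 0) = 1"
  by (simp add: moebius_mu_def)

text \<open>The fundamental identity \<Sum>_{d|n} \<mu>(d) = [n = 1].  Only squarefree divisors contribute,
  and summing over them amounts to summing (-1)^|S| over subsets S of the prime factors.\<close>
lemma moebius_divisor_sum:
  assumes "n > 0"
  shows "(\<Sum>d | d dvd n. moebius_mu d) = (if n = 1 then 1 else 0)"
proof -
  have "(\<Sum>d | d dvd n. moebius_mu d) = (\<Sum>d | d dvd n \<and> squarefree d. moebius_mu d)"
    by (rule sum.mono_neutral_right) (use assms in \<open>auto simp: moebius_mu_def\<close>)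
  also have "\<dots> = (\<Sum>d | d dvd n \<and> squarefree d. (-1) ^ card (prime_factors d))"
    by (rule sum.cong) (use assms in \<open>auto simp: moebius_mu_def\<close>)
  also have "\<dots> = (\<Sum>S\<in>Pow (prime_factors n). (-1) ^ card S)"
    by (rule sum.reindex_bij_witness[where i = "\<lambda>S. \<Prod>S" and j = prime_factors])
       (use prime_factors_prod_subset prod_subset_prime_factors_dvd assms
            squarefree_prod_subset_prime_factors squarefree_prod_prime_factors
            dvd_prime_factors[of n] in \<open>auto intro: Nat.gr0I\<close>)
  also have "\<dots> = (if n = 1 then 1 else 0)"
  proof (cases "n = 1")
    case False
    then have "prime_factors n \<noteq> {}"
      using assms prime_factorization_empty_iff[of n] by auto
    then show ?thesis
      using alternating_sum_Pow[of "prime_factors n"] False by simp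
  qed simp
  finally show ?thesis .
qed

lemma has_sum_neg_ln_one_minus:
  fixes y :: real
  assumes "0 \<le> y" "y < 1"
  shows "((\<lambda>m. y ^ m / real m) has_sum (- ln (1 - y))) {1..}"
proof -
  have "(\<lambda>n. - ((-(-y))^n) / of_nat n) sums ln (1 + (-y))"
    by (rule ln_series') (use assms in auto)
  then have "(\<lambda>n. y^n / real n) sums (- ln (1 - y))"
    using sums_minus by fastforce
  then have "((\<lambda>n. y^n / real n) has_sum (- ln (1 - y))) UNIV"
    by (rule sums_nonneg_imp_has_sum) (use assms in auto)
  then show ?thesis
    by (rule has_sum_cong_neutral[THEN iffD1, rotated -1]) (auto simp: not_less_eq_eq)
qed

lemma has_sum_regroup_by_product:
  fixes g :: "nat \<times> nat \<Rightarrow> 'a::{comm_monoid_add, topological_space}"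
  shows "(g has_sum T) (Sigma {1..} (\<lambda>_. {1..})) \<longleftrightarrow>
         ((\<lambda>(n, d). g (d, n div d)) has_sum T) (Sigma {1..} (\<lambda>n. {d. d dvd n}))"
  by (rule has_sum_reindex_bij_witness[where j = "\<lambda>(k, m). (k * m, k)" and i = "\<lambda>(n, d). (d, n div d)"])
     (auto simp: dvd_div_eq_0_iff Suc_le_eq intro: Nat.gr0I dest: dvd_imp_le)

text \<open>The geometric majorant \<Sum>_{k,m\<ge>1} x^(km) of the Lambert double series converges,
  since its k-th row sums to x^k/(1 - x^k) \<le> x^k/(1 - x).\<close>
lemma lambert_majorant_summable:
  fixes x :: real
  assumes x: "0 \<le> x" "x < 1"
  shows "(\<lambda>(k, m). x ^ (k * m)) summable_on Sigma {1::nat..} (\<lambda>_. {1::nat..})"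
proof (rule summable_on_SigmaI[where g = "\<lambda>k. x ^ k / (1 - x ^ k)"])
  fix k :: nat assume k: "k \<in> {1..}"
  have "norm (x ^ k) < 1"
    using x k by (simp add: power_less_one_iff)
  from has_sum_geometric_from_1[OF this]
  show "((\<lambda>m. case (k, m) of (k, m) \<Rightarrow> x ^ (k * m)) has_sum (x ^ k / (1 - x ^ k))) {1..}"
    by (simp add: power_mult)
next
  show "(\<lambda>k. x ^ k / (1 - x ^ k)) summable_on {1..}"
  proof (rule summable_on_comparison_test)
    have "norm x < 1" using x by simp
    from has_sum_geometric_from_1[OF this]
    have "(\<lambda>k. x ^ k) summable_on {1..}" by (auto simp: summable_on_def)
    then show "(\<lambda>k. x ^ k / (1 - x)) summable_on {1..}"
      using summable_on_cmult_left[of "\<lambda>k. x ^ k" "{1..}" "1 / (1 - x)"] by simp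
  next
    fix k :: nat assume k: "k \<in> {1..}"
    have "x ^ k \<le> x" "x ^ k < 1"
      using x k power_decreasing[of 1 k x] by (auto simp: power_less_one_iff)
    then show "x ^ k / (1 - x ^ k) \<le> x ^ k / (1 - x)"
      using x by (intro divide_left_mono) auto
    show "0 \<le> x ^ k / (1 - x ^ k)"
      using \<open>x ^ k < 1\<close> x by simp
  qed
qed (use x in auto)

lemma lambert_double_series_summable:
  fixes f :: "nat \<Rightarrow> real" and x C :: real
  assumes x: "0 \<le> x" "x < 1" and bound: "\<And>k. k \<ge> 1 \<Longrightarrow> \<bar>f k\<bar> \<le> C * real k"
  shows "(\<lambda>(k, m). f k / real k * (x ^ (k * m) / real m)) summable_on Sigma {1..} (\<lambda>_. {1..})"
proof -
  have "(\<lambda>(k, m). C * x ^ (k * m)) summable_on Sigma {1::nat..} (\<lambda>_. {1::nat..})"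
    using summable_on_cmult_right[OF lambert_majorant_summable[OF x], of C]
    by (simp add: case_prod_unfold)
  then have "(\<lambda>(k, m). norm (f k / real k * (x ^ (k * m) / real m)))
               summable_on Sigma {1..} (\<lambda>_. {1..})"
  proof (rule summable_on_comparison_test)
    fix p :: "nat \<times> nat" assume "p \<in> Sigma {1..} (\<lambda>_. {1..})"
    then obtain k m where p: "p = (k, m)" "k \<ge> 1" "m \<ge> 1" by auto
    have C: "0 \<le> C" using bound[of 1] by simp
    have "\<bar>f k\<bar> / real k \<le> C"
      using bound[OF p(2)] p(2) by (simp add: divide_le_eq)
    moreover have "x ^ (k * m) / real m \<le> x ^ (k * m)"
      using p(3) x by (simp add: divide_le_eq mult_le_cancel_left1)
    ultimately have "\<bar>f k\<bar> / real k * (x ^ (k * m) / real m) \<le> C * x ^ (k * m)"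
      using x p C by (intro mult_mono) auto
    then show "(case p of (k, m) \<Rightarrow> norm (f k / real k * (x ^ (k * m) / real m)))
               \<le> (case p of (k, m) \<Rightarrow> C * x ^ (k * m))"
      using p x by (simp add: abs_mult)
  qed auto
  then show ?thesis
    by (subst summable_on_iff_abs_summable_on_real) (simp add: case_prod_unfold)
qed

lemma lambert_series_identity:
  fixes f :: "nat \<Rightarrow> real" and x C S :: real
  assumes x: "0 \<le> x" "x < 1" and bound: "\<And>k. k \<ge> 1 \<Longrightarrow> \<bar>f k\<bar> \<le> C * real k"
    and S: "((\<lambda>n. (\<Sum>d | d dvd n. f d) / real n * x ^ n) has_sum S) {1..}"
  shows "((\<lambda>k. - (f k / real k) * ln (1 - x ^ k)) has_sum S) {1..}"
proof -
  define h where "h = (\<lambda>(k, m). f k / real k * (x ^ (k * m) / real m))"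
  obtain T where h_T: "(h has_sum T) (Sigma {1..} (\<lambda>_. {1..}))"
    using lambert_double_series_summable[OF x bound] unfolding h_def summable_on_def by blast
  text \<open>Summing the rows k first gives the logarithmic side.\<close>
  have rows: "((\<lambda>k. - (f k / real k) * ln (1 - x ^ k)) has_sum T) {1..}"
  proof (rule has_sum_Sigma'[OF h_T])
    fix k :: nat assume k: "k \<in> {1..}"
    have "0 \<le> x ^ k" "x ^ k < 1" using x k by (auto simp: power_less_one_iff)
    from has_sum_cmult_right[OF has_sum_neg_ln_one_minus[OF this], of "f k / real k"]
    show "((\<lambda>m. h (k, m)) has_sum (- (f k / real k) * ln (1 - x ^ k))) {1..}"
      by (simp add: h_def power_mult)
  qed
  text \<open>Grouping by n = k m first gives the divisor-sum side.\<close>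
  have "((\<lambda>(n, d). h (d, n div d)) has_sum T) (Sigma {1..} (\<lambda>n. {d. d dvd n}))"
    using h_T has_sum_regroup_by_product by blast
  then have "((\<lambda>n. \<Sum>d | d dvd n. h (d, n div d)) has_sum T) {1..}"
    by (rule has_sum_Sigma') (auto intro!: has_sum_finiteI)
  moreover have "(\<Sum>d | d dvd n. h (d, n div d)) = (\<Sum>d | d dvd n. f d) / real n * x ^ n"
    if "n \<in> {1..}" for n
  proof -
    have "h (d, n div d) = f d * x ^ n / real n" if "d dvd n" for d
      using that \<open>n \<in> {1..}\<close> by (auto simp: h_def field_simps elim!: dvdE)
    then show ?thesis
      by (simp add: sum_divide_distrib sum_distrib_right)
  qed
  ultimately have "((\<lambda>n. (\<Sum>d | d dvd n. f d) / real n * x ^ n) has_sum T) {1..}"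
    using has_sum_cong by (metis (no_types, lifting))
  with S have "T = S" using has_sum_unique by blast
  with rows show ?thesis by simp
qed

lemma has_sum_from_1_imp_sums:
  assumes "(F has_sum S) {1::nat..}"
  shows "(\<lambda>n. F (Suc n)) sums S"
proof -
  have "bij_betw Suc UNIV {1::nat..}"
    by (rule bij_betwI[where g = "\<lambda>n. n - 1"]) auto
  from has_sum_reindex_bij_betw[OF this, of F] assms
  have "((\<lambda>n. F (Suc n)) has_sum S) UNIV" by simp
  then show ?thesis by (rule has_sum_imp_sums)
qed

lemma golden_ratio_gt_1: "golden_ratio > 1"
proof -
  have "sqrt 5 > 1" by (simp add: real_less_rsqrt)
  then show ?thesis by (simp add: golden_ratio_def)
qed

text \<open>From \<tau>^2 = \<tau> + 1: with x = 1/\<tau>, the geometric series sum x/(1 - x) equals \<tau>.\<close>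
lemma golden_ratio_geometric: "(1 / golden_ratio) / (1 - 1 / golden_ratio) = golden_ratio"
proof -
  have "golden_ratio * golden_ratio = golden_ratio + 1"
    unfolding golden_ratio_def by (simp add: algebra_simps add_divide_distrib)
  then show ?thesis
    using golden_ratio_gt_1 by (simp add: field_simps)
qed

theorem lemma2:
  shows "((\<lambda>n. - (real (totient (Suc n)) / real (Suc n))
                 * ln (1 - 1 / golden_ratio ^ Suc n)) sums golden_ratio) \<and>
         ((\<lambda>n. - (real_of_int (moebius_mu (Suc n)) / real (Suc n))
                 * ln (1 - 1 / golden_ratio ^ Suc n)) sums (1 / golden_ratio))"
proof -
  define x where "x = 1 / golden_ratio"
  have x: "0 \<le> x" "x < 1" "norm x < 1"
    using golden_ratio_gt_1 by (auto simp: x_def)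
  text \<open>Totient: \<Sum>_{d|n} \<phi>(d) = n, so the Lambert side is the geometric series.\<close>
  have "((\<lambda>n. (\<Sum>d | d dvd n. real (totient d)) / real n * x ^ n) has_sum golden_ratio) {1..}"
    using has_sum_geometric_from_1[OF x(3)] golden_ratio_geometric
    by (subst has_sum_cong[where g = "power x"])
       (auto simp flip: of_nat_sum simp: totient_divisor_sum x_def)
  from lambert_series_identity[where C = 1, OF x(1,2) _ this]
  have totient: "((\<lambda>k. - (real (totient k) / real k) * ln (1 - x ^ k)) has_sum golden_ratio) {1..}"
    by (simp add: totient_le)
  text \<open>Moebius: \<Sum>_{d|n} \<mu>(d) = [n = 1], so the Lambert side is the single term x.\<close>
  have "((\<lambda>n. (\<Sum>d | d dvd n. real_of_int (moebius_mu d)) / real n * x ^ n) has_sum x) {1..}"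
    by (rule has_sum_finite_neutralI[where B = "{1}"])
       (auto simp flip: of_int_sum simp: moebius_divisor_sum moebius_mu_one)
  from lambert_series_identity[where C = 1, OF x(1,2) _ this]
  have moebius: "((\<lambda>k. - (real_of_int (moebius_mu k) / real k) * ln (1 - x ^ k)) has_sum x) {1..}"
    by (simp add: moebius_mu_def)
  show ?thesis
    using has_sum_from_1_imp_sums[OF totient] has_sum_from_1_imp_sums[OF moebius]
    unfolding x_def power_one_over by blast
qed

end
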